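(* Let $p\in\Delta_n$ be an unknown distribution on $\{1,\dots,n\}$ and let $X^1=\{x_1,\dots,x_N\}$ be i.i.d. from $p$. Fix $\delta\in(0,1)$, let $m=\lceil\log_2 n\rceil$ and $$S=\min\Big\{S\in\mathbb N:\ \sum_{k=S}^{2S}\binom{2S}{k}\left(\tfrac13\right)^k\left(\tfrac23\right)^{2S-k}\le\frac{\delta}{\lceil\log_2 n\rceil}\Big\}.$$ For $i=1,\dots,m$ let $\rho_i=2^{-i/2}$, let $P_i>0$ be the solution of $3\left[2^{7/4}P_i^{-1/2}\rho_i^{3/2}+2P_i^{-1}\rho_i\right]=\tfrac13\rho_i^2$, and $Q_i=\lceil P_i\rceil$. Consider the following training-step: for $i=1,2,\dots$, use $4S$ consecutive segments of cardinality $Q_i$ each of $X^1$ (namely the first $4SQ_i$ observations) to build $2S$ pairs $(\xi_s,\xi'_s)$, $s=1,\dots,2S$, of empirical distributions of pairs of these segments, set $\theta_s=\xi_s^T\xi'_s$ and let $\Theta_i$ be the median of $\theta_1,\dots,\theta_{2S}$; terminate if $\Theta_i\ge 2\rho_i^2/3$, or $i=m$, or $N<4SQ_{i+1}$; otherwise proceed to $i+1$. Upon termination at stage $i$, output $\varrho=\Theta_i+\rho_i^2/3$. Let $i(p)$ be the smallest $i\le m$ such that $\rho_i\le\|p\|_2$, and assume $N\ge 4SQ_{i(p)}$. Then with probability at least $1-\delta$ the training-step terminates at some stage $\le i(p)$ and outputs $\varrho$ satisfying $\|p\|_2^2\le\varrho\le3\|p\|_2^2$. Moreover, the number of observations used by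 a training-step that terminates within the first $i(p)$ stages is at most $4SQ_{i(p)}\le C\ln(\ln(n)/\delta)/\|p\|_2$ for an absolute constant $C$.
   Context: $\Delta_n=\{r\in\mathbb{R}^n:r\ge0,\sum_ir_i=1\}$; $n\ge2$. The empirical distribution of a set of observations in $\{1,\dots,n\}$ is the vector of relative frequencies. Note $i(p)$ is well defined since $\rho_m\le n^{-1/2}\le\|p\|_2$. *)

theory Defs
  imports "HOL-Probability.Probability"
begin

definition stages :: "nat \<Rightarrow> nat" where
  "stages n = nat \<lceil>log 2 (real n)\<rceil>"

definition binom_tail :: "nat \<Rightarrow> real" where
  "binom_tail S = (\<Sum>k=S..2*S. real ((2*S) choose k) * (1/3)^k * (2/3)^(2*S-k))"

definition S_param :: "nat \<Rightarrow> real \<Rightarrow> nat" where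
  "S_param n \<delta> = (LEAST S. binom_tail S \<le> \<delta> / real (stages n))"

definition rho :: "nat \<Rightarrow> real" where
  "rho i = 2 powr (- real i / 2)"

definition P_param :: "nat \<Rightarrow> real" where
  "P_param i = (THE P. P > 0 \<and>
     3 * (2 powr (7/4) * P powr (-1/2) * rho i powr (3/2) + 2 * P powr (-1) * rho i)
       = rho i ^ 2 / 3)"

definition Q_param :: "nat \<Rightarrow> nat" where
  "Q_param i = nat \<lceil>P_param i\<rceil>"

text \<open>Empirical distribution of the j-th segment (0-indexed) of length Q of the sample x
  (observation t of the sample is x t, t = 0,1,...); evaluated at the point k.\<close>
definition emp_dist :: "(nat \<Rightarrow> nat) \<Rightarrow> nat \<Rightarrow> nat \<Rightarrow> nat \<Rightarrow> real" where
  "emp_dist x Q j k = real (card {t \<in> {..<Q}. x (j*Q + t) = k}) / real Q"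

definition theta :: "nat \<Rightarrow> (nat \<Rightarrow> nat) \<Rightarrow> nat \<Rightarrow> nat \<Rightarrow> real" where
  "theta n x Q r = (\<Sum>k=1..n. emp_dist x Q (2 * r) k * emp_dist x Q (2 * r + 1) k)"

definition median :: "real list \<Rightarrow> real" where
  "median xs = (let ys = sort xs; l = length ys in
     if even l then (ys ! (l div 2 - 1) + ys ! (l div 2)) / 2 else ys ! (l div 2))"

definition Theta :: "nat \<Rightarrow> real \<Rightarrow> (nat \<Rightarrow> nat) \<Rightarrow> nat \<Rightarrow> real" where
  "Theta n \<delta> x i = median (map (\<lambda>s. theta n x (Q_param i) s) [0..<2 * S_param n \<delta>])"

definition stop_cond :: "nat \<Rightarrow> real \<Rightarrow> nat \<Rightarrow> (nat \<Rightarrow> nat) \<Rightarrow> nat \<Rightarrow> bool" where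
  "stop_cond n \<delta> N x i \<longleftrightarrow>
     Theta n \<delta> x i \<ge> 2 * rho i ^ 2 / 3 \<or> i = stages n \<or> N < 4 * S_param n \<delta> * Q_param (i+1)"

definition stop_stage :: "nat \<Rightarrow> real \<Rightarrow> nat \<Rightarrow> (nat \<Rightarrow> nat) \<Rightarrow> nat" where
  "stop_stage n \<delta> N x = (LEAST i. 1 \<le> i \<and> stop_cond n \<delta> N x i)"

definition estimate :: "nat \<Rightarrow> real \<Rightarrow> nat \<Rightarrow> (nat \<Rightarrow> nat) \<Rightarrow> real" where
  "estimate n \<delta> N x = (let i = stop_stage n \<delta> N x in Theta n \<delta> x i + rho i ^ 2 / 3)"

definition obs_used :: "nat \<Rightarrow> real \<Rightarrow> nat \<Rightarrow> (nat \<Rightarrow> nat) \<Rightarrow> nat" where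
  "obs_used n \<delta> N x = 4 * S_param n \<delta> * Q_param (stop_stage n \<delta> N x)"

definition l2norm :: "nat pmf \<Rightarrow> nat \<Rightarrow> real" where
  "l2norm p n = sqrt (\<Sum>k=1..n. pmf p k ^ 2)"

definition i_of :: "nat \<Rightarrow> nat pmf \<Rightarrow> nat" where
  "i_of n p = (LEAST i. 1 \<le> i \<and> i \<le> stages n \<and> rho i \<le> l2norm p n)"

end

theory Submission
  imports Defs
begin

text \<open>Each \<open>\<theta>\<^sub>s\<close> is the inner product of the empirical distributions of two disjoint
  segments of \<open>Q\<close> observations, so it is an unbiased estimate of \<open>\<parallel>p\<parallel>\<^sup>2\<close> with variance
  at most \<open>\<parallel>p\<parallel>\<^sup>2/Q\<^sup>2 + 2 \<Sum>\<^sub>k p\<^sub>k\<^sup>3/Q\<close>. At every stage \<open>i \<le> i(p)\<close> we have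
  \<open>\<parallel>p\<parallel> \<le> \<surd>2 \<rho>\<^sub>i\<close>, and since \<open>Q\<^sub>i \<ge> 1/(\<kappa>\<^sup>2 \<rho>\<^sub>i)\<close> Chebyshev's inequality bounds the
  probability that \<open>\<theta>\<^sub>s\<close> misses \<open>\<parallel>p\<parallel>\<^sup>2\<close> by more than \<open>\<rho>\<^sub>i\<^sup>2/3\<close> by \<open>2/9\<close>. The median
  \<open>\<Theta>\<^sub>i\<close> of \<open>2S\<close> such estimates, which are independent, misses only if \<open>S\<close> of them do; this
  has probability at most \<open>C(2S,S) (2/9)\<^sup>S\<close>, a single term of the binomial tail defining \<open>S\<close>,
  hence at most \<open>\<delta>/m\<close>. A union bound over the stages \<open>i \<le> i(p) \<le> m\<close> shows that with
  probability \<open>1 - \<delta>\<close> all of them are accurate. Then the threshold test passes at stage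
  \<open>i(p)\<close> because \<open>\<rho>\<^bsub>i(p)\<^esub> \<le> \<parallel>p\<parallel>\<close>, and at whatever stage the procedure stops the
  test has passed, which pins \<open>\<Theta>\<^sub>i + \<rho>\<^sub>i\<^sup>2/3\<close> between \<open>\<parallel>p\<parallel>\<^sup>2\<close> and \<open>3\<parallel>p\<parallel>\<^sup>2\<close>.
  The bound on the sample size follows from \<open>Q\<^sub>i \<le> 1/(\<kappa>\<^sup>2 \<rho>\<^sub>i) + 1\<close>,
  \<open>\<rho>\<^bsub>i(p)\<^esub> \<ge> \<parallel>p\<parallel>/2\<close> and \<open>S = O(log(m/\<delta>))\<close>.\<close>

section \<open>The parameters \<open>\<rho>\<^sub>i\<close>, \<open>P\<^sub>i\<close> and \<open>Q\<^sub>i\<close>\<close>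

lemma two_le_two_powr_7_4: "2 \<le> (2::real) powr (7/4)"
  using powr_mono[of 1 "7/4" "2::real"] by simp

text \<open>The positive root of \<open>6 v\<^sup>2 + 3 \<cdot> 2\<^bsup>7/4\<^esup> v = 1/3\<close>: substituting \<open>v = (P \<rho>)\<^bsup>-1/2\<^esup>\<close>
  turns the defining equation of \<^const>\<open>P_param\<close> into this quadratic, so \<open>P\<^sub>i = 1 / (\<kappa>\<^sup>2 \<rho>\<^sub>i)\<close>.\<close>
definition kappa :: real where
  "kappa = (sqrt (9 * (2 powr (7/4))\<^sup>2 + 8) - 3 * 2 powr (7/4)) / 12"

lemma kappa_pos: "0 < kappa"
proof -
  have "3 * 2 powr (7/4) < sqrt (9 * (2 powr (7/4))\<^sup>2 + (8::real))"
    by (intro real_less_rsqrt) (simp add: power_mult_distrib)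
  then show ?thesis
    unfolding kappa_def by simp
qed

lemma kappa_root: "6 * kappa\<^sup>2 + 3 * 2 powr (7/4) * kappa = 1/3"
proof -
  define a :: real where "a = 2 powr (7/4)"
  define s where "s = sqrt (9 * a\<^sup>2 + 8)"
  have "s\<^sup>2 = 9 * a\<^sup>2 + 8"
    by (simp add: s_def)
  then have "6 * ((s - 3 * a) / 12)\<^sup>2 + 3 * a * ((s - 3 * a) / 12) = 1/3"
    by (simp add: power2_eq_square field_simps)
  then show ?thesis
    by (simp add: kappa_def a_def s_def)
qed

lemma kappa_unique_root:
  assumes "0 < v" "6 * v\<^sup>2 + 3 * 2 powr (7/4) * v = 1/3"
  shows "v = kappa"
proof -
  have "(v - kappa) * (6 * (v + kappa) + 3 * 2 powr (7/4)) = 0"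
    using assms(2) kappa_root by (simp add: power2_eq_square algebra_simps)
  moreover have "0 < 6 * (v + kappa) + 3 * 2 powr (7/4)"
    using assms(1) kappa_pos by (simp add: add_pos_pos)
  ultimately show ?thesis
    by simp
qed

lemma kappa_le: "kappa \<le> 1/18"
proof -
  have "2 * kappa \<le> 2 powr (7/4) * kappa"
    using two_le_two_powr_7_4 kappa_pos by (intro mult_right_mono) auto
  then show ?thesis
    using kappa_root zero_le_power2[of kappa] by linarith
qed

lemma rho_pos: "0 < rho i"
  by (simp add: rho_def)

lemma rho_le_1: "rho i \<le> 1"
  using powr_mono[of "- real i / 2" 0 "2::real"] by (simp add: rho_def)

lemma rho_antimono: "i \<le> j \<Longrightarrow> rho j \<le> rho i"
  unfolding rho_def by (intro powr_mono) (auto simp: divide_right_mono)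

lemma rho_eq_sqrt2_mult_rho_Suc: "rho i = sqrt 2 * rho (Suc i)"
proof -
  have "rho i = 2 powr (1/2) * 2 powr (- real (Suc i) / 2)"
    unfolding rho_def powr_add[symmetric] by (simp add: field_simps)
  then show ?thesis
    by (simp add: rho_def powr_half_sqrt)
qed

lemma rho_squared: "(rho i)\<^sup>2 = 1 / 2 ^ i"
proof -
  have "(rho i)\<^sup>2 = 2 powr (- real i)"
    unfolding rho_def power2_eq_square powr_add[symmetric] by simp
  then show ?thesis
    by (simp add: powr_minus_divide powr_realpow)
qed

lemma P_equation_rescaled:
  assumes "0 < P" "0 < r"
  shows "3 * (2 powr (7/4) * P powr (-1/2) * r powr (3/2) + 2 * P powr (-1) * r) =
    r\<^sup>2 * (6 * (1 / sqrt (P * r))\<^sup>2 + 3 * 2 powr (7/4) * (1 / sqrt (P * r)))"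
proof -
  have P_half: "P powr (-1/2) = 1 / sqrt P"
    using assms(1) powr_minus_divide[of P "1/2"] by (simp add: powr_half_sqrt)
  have r_three_halves: "r powr (3/2) = r * sqrt r"
    using assms(2) powr_add[of r 1 "1/2"] by (simp add: powr_half_sqrt)
  have P_inverse: "P powr (-1) = 1 / P"
    using assms(1) by (simp add: powr_minus_divide)
  show ?thesis
    unfolding P_half r_three_halves P_inverse
    using assms by (simp add: real_sqrt_mult power2_eq_square field_simps)
qed

lemma P_param_eq: "P_param i = 1 / (kappa\<^sup>2 * rho i)"
proof -
  define r where "r = rho i"
  have r: "0 < r"
    by (simp add: r_def rho_pos)
  have equation_iff:
    "3 * (2 powr (7/4) * P powr (-1/2) * r powr (3/2) + 2 * P powr (-1) * r) = r\<^sup>2 / 3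
      \<longleftrightarrow> P = 1 / (kappa\<^sup>2 * r)" if P: "0 < P" for P
  proof -
    define v where "v = 1 / sqrt (P * r)"
    have v: "0 < v"
      using P r by (simp add: v_def)
    have "3 * (2 powr (7/4) * P powr (-1/2) * r powr (3/2) + 2 * P powr (-1) * r) = r\<^sup>2 / 3
        \<longleftrightarrow> r\<^sup>2 * (6 * v\<^sup>2 + 3 * 2 powr (7/4) * v) = r\<^sup>2 * (1/3)"
      unfolding P_equation_rescaled[OF P r] v_def by simp
    also have "\<dots> \<longleftrightarrow> 6 * v\<^sup>2 + 3 * 2 powr (7/4) * v = 1/3"
      using r by simp
    also have "\<dots> \<longleftrightarrow> v = kappa"
      using kappa_unique_root[OF v] kappa_root by auto
    also have "\<dots> \<longleftrightarrow> v\<^sup>2 = kappa\<^sup>2"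
      using v kappa_pos by (simp add: power2_eq_iff_nonneg)
    also have "\<dots> \<longleftrightarrow> P * r = 1 / kappa\<^sup>2"
      using P r kappa_pos by (auto simp: v_def power_divide field_simps)
    also have "\<dots> \<longleftrightarrow> P = 1 / (kappa\<^sup>2 * r)"
      using r kappa_pos by (auto simp: field_simps)
    finally show ?thesis .
  qed
  have pos: "0 < 1 / (kappa\<^sup>2 * r)"
    using r kappa_pos by simp
  show ?thesis
    unfolding P_param_def r_def[symmetric]
    by (rule the_equality) (use equation_iff[OF pos] pos equation_iff in blast)+
qed

lemma Q_param_ge: "1 / (kappa\<^sup>2 * rho i) \<le> real (Q_param i)"
  unfolding Q_param_def P_param_eq by linarith

lemma Q_param_le: "real (Q_param i) \<le> 1 / (kappa\<^sup>2 * rho i) + 1"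
proof -
  have "0 < 1 / (kappa\<^sup>2 * rho i)"
    using kappa_pos rho_pos by simp
  then show ?thesis
    unfolding Q_param_def P_param_eq by linarith
qed

lemma Q_param_pos: "1 \<le> Q_param i"
proof -
  have "0 < 1 / (kappa\<^sup>2 * rho i)"
    using kappa_pos rho_pos by simp
  then show ?thesis
    unfolding Q_param_def P_param_eq by linarith
qed

lemma Q_param_mono: "i \<le> j \<Longrightarrow> Q_param i \<le> Q_param j"
  unfolding Q_param_def P_param_eq
  using rho_antimono kappa_pos rho_pos
  by (intro nat_mono ceiling_mono divide_left_mono mult_left_mono mult_pos_pos) auto

section \<open>The binomial tail and the number of repetitions\<close>

lemma binom_tail_le_pow: "binom_tail S \<le> (8/9) ^ S"
proof -
  have term_le: "(1/3) ^ k * (2/3) ^ (2 * S - k) \<le> (2/9 :: real) ^ S" if "S \<le> k" for k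
  proof -
    have "(1/3 :: real) ^ k * (2/3) ^ (2 * S - k) =
        (1/3) ^ S * (1/3) ^ (k - S) * (2/3) ^ (2 * S - k)"
      using that by (simp flip: power_add)
    also have "\<dots> \<le> (1/3) ^ S * (2/3) ^ (k - S) * (2/3) ^ (2 * S - k)"
      by (intro mult_right_mono mult_left_mono power_mono) auto
    also have "\<dots> \<le> (1/3) ^ S * (2/3) ^ S"
      using that by (cases "k \<le> 2 * S") (simp_all add: mult.assoc flip: power_add)
    finally show ?thesis
      by (simp add: power_mult_distrib[symmetric])
  qed
  have "binom_tail S \<le> (\<Sum>k=S..2*S. real ((2*S) choose k) * (2/9) ^ S)"
    unfolding binom_tail_def
    by (intro sum_mono) (auto simp: mult.assoc intro!: mult_left_mono term_le)
  also have "\<dots> \<le> (\<Sum>k\<le>2*S. real ((2*S) choose k) * (2/9) ^ S)"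
    by (intro sum_mono2) auto
  also have "\<dots> = 4 ^ S * (2/9) ^ S"
    by (simp flip: sum_distrib_right of_nat_sum add: choose_row_sum power_mult)
  also have "\<dots> = (8/9) ^ S"
    by (simp flip: power_mult_distrib)
  finally show ?thesis .
qed

lemma central_binomial_le_binom_tail: "real ((2*S) choose S) * (2/9) ^ S \<le> binom_tail S"
proof -
  have "real ((2*S) choose S) * (2/9) ^ S = real ((2*S) choose S) * (1/3) ^ S * (2/3) ^ (2*S - S)"
    by (simp add: mult.assoc power_mult_distrib[symmetric])
  also have "\<dots> \<le> binom_tail S"
    unfolding binom_tail_def
    by (rule member_le_sum[where f = "\<lambda>k. real ((2*S) choose k) * (1/3) ^ k * (2/3) ^ (2*S - k)"])
      auto
  finally show ?thesis .
qed

lemma binom_tail_le_at_log: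
  assumes "0 < q"
  shows "binom_tail (nat \<lceil>log (9/8) (1/q)\<rceil>) \<le> q"
proof -
  define S where "S = nat \<lceil>log (9/8) (1/q)\<rceil>"
  have "1/q = (9/8) powr log (9/8) (1/q)"
    using assms by simp
  also have "\<dots> \<le> (9/8) powr real S"
    unfolding S_def by (intro powr_mono real_nat_ceiling_ge) auto
  also have "\<dots> = (9/8) ^ S"
    by (simp add: powr_realpow)
  finally have "(8/9) ^ S \<le> q"
    using assms by (simp add: power_divide field_simps)
  then show ?thesis
    using binom_tail_le_pow[of S] by (simp add: S_def)
qed

lemma one_le_log2: "2 \<le> n \<Longrightarrow> 1 \<le> log 2 (real n)"
  using log_le_cancel_iff[of 2 2 "real n"] by simp

lemma stages_ge_1: "2 \<le> n \<Longrightarrow> 1 \<le> stages n"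
proof -
  assume "2 \<le> n"
  then have "1 \<le> real (stages n)"
    using one_le_log2 real_nat_ceiling_ge[of "log 2 (real n)"] unfolding stages_def by fastforce
  then show ?thesis
    by simp
qed

lemma two_pow_stages_ge: "2 \<le> n \<Longrightarrow> real n \<le> 2 ^ stages n"
proof -
  assume n: "2 \<le> n"
  have "real n = 2 powr log 2 (real n)"
    using n by simp
  also have "\<dots> \<le> 2 powr real (stages n)"
    unfolding stages_def by (intro powr_mono real_nat_ceiling_ge) auto
  finally show ?thesis
    by (simp add: powr_realpow)
qed

lemma stages_le_4_ln: "2 \<le> n \<Longrightarrow> real (stages n) \<le> 4 * ln (real n)"
proof -
  assume n: "2 \<le> n"
  have ln_n: "ln 2 \<le> ln (real n)"
    using n by simp
  have "real (stages n) \<le> log 2 (real n) + 1"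
    unfolding stages_def using n one_le_log2[OF n] ceiling_correct[of "log 2 (real n)"] by simp
  also have "\<dots> = ln (real n) / ln 2 + 1"
    by (simp add: log_def)
  also have "\<dots> \<le> ln (real n) / (2/3) + 1"
    using ln2_ge_two_thirds ln_n by (intro add_right_mono divide_left_mono) auto
  also have "\<dots> \<le> 4 * ln (real n)"
    using ln2_ge_two_thirds ln_n by simp
  finally show ?thesis .
qed

context
  fixes n :: nat and \<delta> :: real
  assumes n: "2 \<le> n" and \<delta>: "0 < \<delta>" "\<delta> < 1"
begin

lemma binom_tail_S_param: "binom_tail (S_param n \<delta>) \<le> \<delta> / real (stages n)"
proof -
  have "0 < \<delta> / real (stages n)"
    using \<delta> stages_ge_1[OF n] by simp
  from binom_tail_le_at_log[OF this] show ?thesis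
    unfolding S_param_def by (rule LeastI)
qed

lemma S_param_le_log: "real (S_param n \<delta>) \<le> log (9/8) (real (stages n) / \<delta>) + 1"
proof -
  define x where "x = log (9/8) (real (stages n) / \<delta>)"
  have "0 < \<delta> / real (stages n)"
    using \<delta> stages_ge_1[OF n] by simp
  from binom_tail_le_at_log[OF this] have "S_param n \<delta> \<le> nat \<lceil>x\<rceil>"
    unfolding S_param_def x_def by (simp add: Least_le)
  moreover have "0 \<le> x"
    using \<delta> stages_ge_1[OF n] by (simp add: x_def)
  ultimately show ?thesis
    using ceiling_correct[of x] by (simp add: x_def[symmetric])
qed

lemma S_param_le_log_log:
  shows "real (S_param n \<delta>) \<le> 28 * max 1 (ln (ln (real n) / \<delta>))"
proof -
  define m where "m = real (stages n)"
  have m: "1 \<le> m" "m \<le> 4 * ln (real n)"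
    using stages_ge_1[OF n] stages_le_4_ln[OF n] by (simp_all add: m_def)
  have ln_n: "0 < ln (real n)"
    using n by simp
  have "1/9 \<le> ln (9/8 :: real)"
    using ln_le_minus_one[of "8/9 :: real"] by (simp add: ln_div)
  moreover have "0 \<le> ln (m / \<delta>)"
    using m \<delta> by simp
  ultimately have "ln (m / \<delta>) / ln (9/8) \<le> ln (m / \<delta>) / (1/9)"
    by (intro divide_left_mono) auto
  then have "log (9/8) (m / \<delta>) \<le> 9 * ln (m / \<delta>)"
    by (simp add: log_def)
  also have "ln (m / \<delta>) \<le> ln (4 * (ln (real n) / \<delta>))"
    using m \<delta> ln_n by (simp add: divide_right_mono)
  also have "\<dots> = ln 4 + ln (ln (real n) / \<delta>)"
    using \<delta> ln_n by (intro ln_mult_pos) auto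
  also have "ln (4 :: real) \<le> 2"
    using ln_2_less_1 ln_realpow[of 2 2] by simp
  finally have "log (9/8) (m / \<delta>) \<le> 18 + 9 * ln (ln (real n) / \<delta>)"
    by simp
  then show ?thesis
    using S_param_le_log by (simp add: m_def)
qed

end

section \<open>Medians\<close>

lemma median_mem_interval:
  fixes xs :: "real list"
  assumes few_outside: "2 * length (filter (\<lambda>v. v \<notin> {lo..hi}) xs) < length xs"
  shows "median xs \<in> {lo..hi}"
proof -
  define ys where "ys = sort xs"
  define l where "l = length xs"
  have sorted: "sorted ys" and len: "length ys = l"
    by (simp_all add: ys_def l_def)
  have "length (filter (\<lambda>v. v \<notin> {lo..hi}) ys) = length (filter (\<lambda>v. v \<notin> {lo..hi}) xs)"
    by (simp only: ys_def filter_sort length_sort)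
  then have outside: "2 * card {j. j < l \<and> ys ! j \<notin> {lo..hi}} < l"
    using few_outside unfolding length_filter_conv_card len l_def by simp
  have lower: "lo \<le> ys ! ((l - 1) div 2)"
  proof (rule ccontr)
    assume "\<not> lo \<le> ys ! ((l - 1) div 2)"
    then have "{..(l - 1) div 2} \<subseteq> {j. j < l \<and> ys ! j \<notin> {lo..hi}}"
      using sorted_nth_mono[OF sorted, of _ "(l - 1) div 2"] outside len by fastforce
    from card_mono[OF _ this] outside show False
      by simp
  qed
  have upper: "ys ! (l div 2) \<le> hi"
  proof (rule ccontr)
    assume "\<not> ys ! (l div 2) \<le> hi"
    then have "{l div 2..<l} \<subseteq> {j. j < l \<and> ys ! j \<notin> {lo..hi}}"
      using sorted_nth_mono[OF sorted, of "l div 2"] len by fastforce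
    from card_mono[OF _ this] outside show False
      by simp
  qed
  have "ys ! ((l - 1) div 2) \<le> ys ! (l div 2)"
    using sorted_nth_mono[OF sorted] outside len by simp
  moreover have "median xs = (ys ! ((l - 1) div 2) + ys ! (l div 2)) / 2" if "even l"
  proof -
    have "(l - 1) div 2 = l div 2 - 1"
      using that outside by (auto elim!: evenE)
    then show ?thesis
      by (simp add: median_def Let_def ys_def[symmetric] l_def[symmetric] len that)
  qed
  moreover have "median xs = ys ! ((l - 1) div 2)" if "odd l"
  proof -
    have "(l - 1) div 2 = l div 2"
      using that by (auto elim!: oddE)
    then show ?thesis
      by (simp add: median_def Let_def ys_def[symmetric] l_def[symmetric] len that)
  qed
  ultimately show ?thesis
    using lower upper by (cases "even l") auto
qed

lemma card_far_ge_if_median_far: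
  fixes f :: "nat \<Rightarrow> real"
  assumes far: "t < \<bar>median (map f [0..<2 * S]) - c\<bar>"
  shows "S \<le> card {r \<in> {..<2 * S}. t < \<bar>f r - c\<bar>}"
proof -
  have "length (filter (\<lambda>v. v \<notin> {c - t..c + t}) (map f [0..<2 * S])) =
      card {r \<in> {..<2 * S}. t < \<bar>f r - c\<bar>}"
    unfolding length_filter_conv_card by (intro arg_cong[where f = card]) auto
  moreover have "median (map f [0..<2 * S]) \<notin> {c - t..c + t}"
    using far by (simp add: abs_if split: if_splits)
  then have "\<not> 2 * length (filter (\<lambda>v. v \<notin> {c - t..c + t}) (map f [0..<2 * S])) < 2 * S"
    using median_mem_interval[of "c - t" "c + t" "map f [0..<2 * S]"] by auto
  ultimately show ?thesis
    by simp
qed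

section \<open>Independence\<close>

lemma (in prob_space) prob_indep_events_at_least_le:
  assumes indep: "indep_events E I" and "finite I" and prob_le: "\<And>i. i \<in> I \<Longrightarrow> prob (E i) \<le> q"
  shows "prob {x \<in> space M. k \<le> card {i \<in> I. x \<in> E i}} \<le> real (card I choose k) * q ^ k"
proof (cases "k = 0")
  case True
  then show ?thesis
    by simp
next
  case False
  define TT where "TT = {T. T \<subseteq> I \<and> card T = k}"
  have events: "E i \<in> events" if "i \<in> I" for i
    using indep that by (auto simp: indep_events_def)
  have finite_TT: "finite TT"
    using \<open>finite I\<close> by (auto simp: TT_def)
  have "{x \<in> space M. k \<le> card {i \<in> I. x \<in> E i}} \<subseteq> (\<Union>T\<in>TT. \<Inter>i\<in>T. E i)"
  proof safe
    fix x assume "x \<in> space M" "k \<le> card {i \<in> I. x \<in> E i}"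
    then obtain T where "T \<subseteq> {i \<in> I. x \<in> E i}" "card T = k"
      using obtain_subset_with_card_n by metis
    then show "x \<in> (\<Union>T\<in>TT. \<Inter>i\<in>T. E i)"
      by (auto simp: TT_def)
  qed
  moreover have Inter_events: "(\<Inter>i\<in>T. E i) \<in> events" if "T \<in> TT" for T
    using that False events \<open>finite I\<close> by (intro sets.finite_INT) (auto simp: TT_def card_gt_0_iff)
  ultimately have "prob {x \<in> space M. k \<le> card {i \<in> I. x \<in> E i}} \<le> prob (\<Union>T\<in>TT. \<Inter>i\<in>T. E i)"
    using finite_TT by (intro finite_measure_mono) auto
  also have "\<dots> \<le> (\<Sum>T\<in>TT. prob (\<Inter>i\<in>T. E i))"
    using finite_TT Inter_events by (intro finite_measure_subadditive_finite) auto
  also have "\<dots> \<le> (\<Sum>T\<in>TT. q ^ k)"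
  proof (intro sum_mono)
    fix T assume T: "T \<in> TT"
    then have "finite T" "T \<noteq> {}"
      using False \<open>finite I\<close> by (auto simp: TT_def intro: finite_subset)
    then have "prob (\<Inter>i\<in>T. E i) = (\<Prod>i\<in>T. prob (E i))"
      using indep T by (auto simp: indep_events_def TT_def)
    also have "\<dots> \<le> (\<Prod>i\<in>T. q)"
      using T prob_le by (intro prod_mono) (auto simp: TT_def)
    finally show "prob (\<Inter>i\<in>T. E i) \<le> q ^ k"
      using T by (simp add: TT_def)
  qed
  also have "\<dots> = real (card I choose k) * q ^ k"
    using n_subsets[OF \<open>finite I\<close>, of k] by (simp add: TT_def)
  finally show ?thesis .
qed

lemma PiM_count_space_finite:
  "finite A \<Longrightarrow>
    PiM A (\<lambda>_. count_space (UNIV :: 'a :: countable set)) = count_space (PiE A (\<lambda>_. UNIV))"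
  using count_space_PiM_finite[of A "\<lambda>_. UNIV :: 'a set"] by simp

lemma finite_set_Pi_pmf:
  "finite I \<Longrightarrow> (\<And>i. i \<in> I \<Longrightarrow> finite (set_pmf (P i))) \<Longrightarrow> finite (set_pmf (Pi_pmf I d P))"
  by (subst set_Pi_pmf) (auto intro!: finite_PiE_dflt)

lemma disjoint_family_on_blocks: "disjoint_family_on (\<lambda>r. {r * L..<r * L + (L :: nat)}) T"
proof -
  have "{r * L..<r * L + L} \<inter> {r' * L..<r' * L + L} = {}" if "r < r'" for r r' :: nat
    using mult_le_mono1[of "Suc r" r' L] that by auto
  then show ?thesis
    unfolding disjoint_family_on_def by (metis inf_commute nat_neq_iff)
qed

lemma expectation_Pi_pmf_component:
  fixes f :: "'a \<Rightarrow> real"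
  assumes "finite I" "i \<in> I"
  shows "measure_pmf.expectation (Pi_pmf I d P) (\<lambda>x. f (x i)) = measure_pmf.expectation (P i) f"
proof -
  have "measure_pmf.expectation (Pi_pmf I d P) (\<lambda>x. f (x i)) =
      measure_pmf.expectation (map_pmf (\<lambda>x. x i) (Pi_pmf I d P)) f"
    by simp
  also have "map_pmf (\<lambda>x. x i) (Pi_pmf I d P) = P i"
    using assms by (simp add: Pi_pmf_component)
  finally show ?thesis .
qed

context
  fixes I :: "'i set" and d :: "'a :: countable" and P :: "'i \<Rightarrow> 'a pmf"
  assumes finite_I: "finite I"
begin

lemma expectation_mult_Pi_pmf_blocks:
  fixes F G :: "('i \<Rightarrow> 'a) \<Rightarrow> real"
  assumes finite_support: "\<And>i. i \<in> I \<Longrightarrow> finite (set_pmf (P i))"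
    and blocks: "A \<subseteq> I" "B \<subseteq> I" "A \<inter> B = {}"
    and F: "\<And>x y. (\<And>i. i \<in> A \<Longrightarrow> x i = y i) \<Longrightarrow> F x = F y"
    and G: "\<And>x y. (\<And>i. i \<in> B \<Longrightarrow> x i = y i) \<Longrightarrow> G x = G y"
  shows "measure_pmf.expectation (Pi_pmf I d P) (\<lambda>x. F x * G x) =
    measure_pmf.expectation (Pi_pmf I d P) F * measure_pmf.expectation (Pi_pmf I d P) G"
proof -
  define M where "M = measure_pmf (Pi_pmf I d P)"
  interpret prob_space M
    unfolding M_def by (rule measure_pmf.prob_space_axioms)
  have coordinates: "indep_vars (\<lambda>_. count_space UNIV) (\<lambda>i x. x i) I"
    unfolding M_def by (rule indep_vars_Pi_pmf[OF finite_I])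
  have "indep_var (PiM A (\<lambda>_. count_space UNIV)) (\<lambda>x. restrict x A)
      (PiM B (\<lambda>_. count_space UNIV)) (\<lambda>x. restrict x B)"
    using indep_var_restrict[OF coordinates blocks(3,1,2)]
    by (simp add: M_def)
  moreover have "F \<in> PiM A (\<lambda>_. count_space UNIV) \<rightarrow>\<^sub>M borel"
    "G \<in> PiM B (\<lambda>_. count_space UNIV) \<rightarrow>\<^sub>M borel"
    using blocks finite_I by (simp_all add: PiM_count_space_finite finite_subset)
  ultimately have "indep_var borel (F \<circ> (\<lambda>x. restrict x A)) borel (G \<circ> (\<lambda>x. restrict x B))"
    by (rule indep_var_compose)
  moreover have "F \<circ> (\<lambda>x. restrict x A) = F" "G \<circ> (\<lambda>x. restrict x B) = G"
    by (auto simp: fun_eq_iff intro!: F G)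
  ultimately have "indep_var borel F borel G"
    by simp
  moreover have "integrable M f" for f :: "_ \<Rightarrow> real"
    unfolding M_def using finite_I finite_support
    by (intro integrable_measure_pmf_finite finite_set_Pi_pmf)
  ultimately have "expectation (\<lambda>x. F x * G x) = expectation F * expectation G"
    by (intro indep_var_lebesgue_integral)
  then show ?thesis
    by (simp add: M_def)
qed

lemma indep_events_Pi_pmf_blocks:
  assumes blocks: "\<And>s. s \<in> T \<Longrightarrow> K s \<subseteq> I" "disjoint_family_on K T"
    and E: "\<And>s x y. s \<in> T \<Longrightarrow> (\<And>i. i \<in> K s \<Longrightarrow> x i = y i) \<Longrightarrow> x \<in> E s \<longleftrightarrow> y \<in> E s"
  shows "prob_space.indep_events (measure_pmf (Pi_pmf I d P)) E T"
proof -
  define M where "M = measure_pmf (Pi_pmf I d P)"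
  interpret prob_space M
    unfolding M_def by (rule measure_pmf.prob_space_axioms)
  have coordinates: "indep_vars (\<lambda>_. count_space UNIV) (\<lambda>i x. x i) I"
    unfolding M_def by (rule indep_vars_Pi_pmf[OF finite_I])
  have "indep_vars (\<lambda>s. PiM (K s) (\<lambda>_. count_space UNIV)) (\<lambda>s x. restrict x (K s)) T"
    using indep_vars_restrict[OF coordinates blocks] by (simp add: M_def)
  moreover have "{g \<in> space (PiM (K s) (\<lambda>_. count_space UNIV)). g \<in> E s}
      \<in> sets (PiM (K s) (\<lambda>_. count_space UNIV))" if "s \<in> T" for s
    unfolding PiM_count_space_finite[OF finite_subset[OF blocks(1)[OF that] finite_I]] by simp
  ultimately have "indep_events (\<lambda>s. {x \<in> space M. restrict x (K s) \<in> E s}) T"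
    by (intro indep_eventsI_indep_vars[where P = "\<lambda>s g. g \<in> E s"])
  moreover have "{x \<in> space M. restrict x (K s) \<in> E s} = E s" if "s \<in> T" for s
  proof -
    have "restrict x (K s) \<in> E s \<longleftrightarrow> x \<in> E s" for x
      using E[OF that, of "restrict x (K s)" x] by simp
    then show ?thesis
      by (auto simp: M_def)
  qed
  ultimately have "indep_events E T"
    unfolding indep_events_def_alt by (simp cong: indep_sets_cong)
  then show ?thesis
    by (simp add: M_def)
qed

end

section \<open>Moments of the pairwise estimates\<close>

lemma emp_dist_eq_sum: "emp_dist x Q j k = (\<Sum>t<Q. of_bool (x (j * Q + t) = k)) / real Q"
  unfolding emp_dist_def by (simp add: Int_def)

lemma emp_dist_cong:
  "(\<And>t. t < Q \<Longrightarrow> x (j * Q + t) = y (j * Q + t)) \<Longrightarrow> emp_dist x Q j k = emp_dist y Q j k"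
  unfolding emp_dist_eq_sum by (intro arg_cong2[where f = "(/)"] sum.cong) auto

lemma theta_cong:
  assumes "\<And>i. i \<in> {2 * r * Q..<(2 * r + 2) * Q} \<Longrightarrow> x i = y i"
  shows "theta n x Q r = theta n y Q r"
  unfolding theta_def using assms
  by (intro sum.cong arg_cong2[where f = "(*)"] emp_dist_cong) (auto simp: algebra_simps)

lemma sum_sum_if_eq:
  "(\<Sum>t<Q. \<Sum>u<Q. if t = u then c else d) = real Q * c + (real Q ^ 2 - real Q) * (d :: real)"
proof -
  have "(\<Sum>u<Q. if t = u then c else d) = real Q * d + (c - d)" if "t < Q" for t
  proof -
    have "(\<Sum>u<Q. if t = u then c else d) = (\<Sum>u<Q. d + (if t = u then c - d else 0))"
      by (intro sum.cong) auto
    then show ?thesis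
      using that by (simp add: sum.distrib)
  qed
  then have "(\<Sum>t<Q. \<Sum>u<Q. if t = u then c else d) = (\<Sum>t<Q. real Q * d + (c - d))"
    by (intro sum.cong) auto
  then show ?thesis
    by (simp add: algebra_simps power2_eq_square)
qed

definition emp_cross_moment :: "nat pmf \<Rightarrow> nat \<Rightarrow> nat \<Rightarrow> nat \<Rightarrow> real" where
  "emp_cross_moment p Q k l =
    (if k = l then pmf p k / real Q else 0) + (1 - 1 / real Q) * pmf p k * pmf p l"

lemma emp_cross_moment_sq_le:
  assumes "1 \<le> Q"
  shows "(emp_cross_moment p Q k l)\<^sup>2 \<le>
    (if k = l then (pmf p k)\<^sup>2 / real Q ^ 2 + 2 * pmf p k ^ 3 / real Q else 0)
      + (pmf p k)\<^sup>2 * (pmf p l)\<^sup>2"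
proof -
  define a where "a = 1 / real Q"
  have a: "0 < a" "a \<le> 1"
    using assms by (auto simp: a_def)
  have moment:
    "emp_cross_moment p Q k l = (if k = l then a * pmf p k else 0) + (1 - a) * pmf p k * pmf p l"
    by (simp add: emp_cross_moment_def a_def)
  have bound:
    "(pmf p k)\<^sup>2 / real Q ^ 2 + 2 * pmf p k ^ 3 / real Q = a\<^sup>2 * (pmf p k)\<^sup>2 + 2 * a * pmf p k ^ 3"
    by (simp add: a_def power_divide)
  have "(1 - a)\<^sup>2 \<le> 1"
    using a by (intro power_le_one) auto
  then have square: "(1 - a)\<^sup>2 * ((pmf p k)\<^sup>2 * (pmf p l)\<^sup>2) \<le> (pmf p k)\<^sup>2 * (pmf p l)\<^sup>2"
    by (intro mult_left_le_one_le) auto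
  show ?thesis
  proof (cases "k = l")
    case True
    have "2 * a * (1 - a) * pmf p k ^ 3 \<le> 2 * a * pmf p k ^ 3"
      using a by (intro mult_right_mono) auto
    moreover have "(emp_cross_moment p Q k l)\<^sup>2 =
        a\<^sup>2 * (pmf p k)\<^sup>2 + 2 * a * (1 - a) * pmf p k ^ 3 + (1 - a)\<^sup>2 * ((pmf p k)\<^sup>2 * (pmf p l)\<^sup>2)"
      unfolding moment using True by (simp add: power2_eq_square power3_eq_cube algebra_simps)
    ultimately show ?thesis
      using True square bound by simp
  next
    case False
    then show ?thesis
      using square by (simp add: moment power_mult_distrib)
  qed
qed

lemma sum_emp_cross_moment_sq_le:
  assumes "finite A" "1 \<le> Q"
  shows "(\<Sum>k\<in>A. \<Sum>l\<in>A. (emp_cross_moment p Q k l)\<^sup>2) \<le>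
    (\<Sum>k\<in>A. (pmf p k)\<^sup>2)\<^sup>2 + (\<Sum>k\<in>A. (pmf p k)\<^sup>2) / real Q ^ 2 + 2 * (\<Sum>k\<in>A. pmf p k ^ 3) / real Q"
proof -
  have "(\<Sum>k\<in>A. \<Sum>l\<in>A. (emp_cross_moment p Q k l)\<^sup>2) \<le>
      (\<Sum>k\<in>A. \<Sum>l\<in>A. (if k = l then (pmf p k)\<^sup>2 / real Q ^ 2 + 2 * pmf p k ^ 3 / real Q else 0)
        + (pmf p k)\<^sup>2 * (pmf p l)\<^sup>2)"
    using assms(2) by (intro sum_mono emp_cross_moment_sq_le)
  also have "\<dots> = (\<Sum>k\<in>A. (pmf p k)\<^sup>2 / real Q ^ 2 + 2 * pmf p k ^ 3 / real Q)
      + (\<Sum>k\<in>A. (pmf p k)\<^sup>2)\<^sup>2"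
    using assms(1) by (simp add: sum.distrib sum_product power2_eq_square)
  finally show ?thesis
    by (simp add: sum.distrib sum_divide_distrib sum_distrib_left)
qed

lemma pair_segments_le: "r < 2 * S \<Longrightarrow> 4 * S * Q \<le> N \<Longrightarrow> (2 * r + 2) * Q \<le> (N :: nat)"
  using mult_le_mono1[of "2 * r + 2" "4 * S" Q] by (simp add: algebra_simps)

context
  fixes p :: "nat pmf" and N :: nat
  assumes finite_support: "finite (set_pmf p)"
begin

lemma integrable_sample: "integrable (measure_pmf (Pi_pmf {..<N} 0 (\<lambda>_. p))) (f :: _ \<Rightarrow> real)"
  using finite_support by (intro integrable_measure_pmf_finite finite_set_Pi_pmf) auto

lemma expectation_indicator:
  assumes "i < N"
  shows "measure_pmf.expectation (Pi_pmf {..<N} 0 (\<lambda>_. p)) (\<lambda>x. of_bool (x i = k)) = pmf p k"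
proof -
  have "measure_pmf.expectation (Pi_pmf {..<N} 0 (\<lambda>_. p)) (\<lambda>x. of_bool (x i = k)) =
      measure_pmf.expectation p (\<lambda>v. of_bool (v = k) :: real)"
    by (rule expectation_Pi_pmf_component) (use assms in auto)
  also have "\<dots> = (\<Sum>v\<in>{k}. of_bool (v = k) * pmf p v)"
    by (rule integral_measure_pmf_real) auto
  finally show ?thesis
    by simp
qed

lemma expectation_indicator_pair:
  assumes "i < N" "i' < N"
  shows "measure_pmf.expectation (Pi_pmf {..<N} 0 (\<lambda>_. p))
      (\<lambda>x. of_bool (x i = k) * of_bool (x i' = l)) =
    (if i = i' then of_bool (k = l) * pmf p k else pmf p k * pmf p l)"
proof (cases "i = i'")
  case True
  have "(\<lambda>x. of_bool (x i = k) * of_bool (x i = l)) =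
      (\<lambda>x. of_bool (k = l) * (of_bool (x i = k) :: real))"
    by auto
  then show ?thesis
    using True assms by (simp add: expectation_indicator)
next
  case False
  then show ?thesis
    using assms finite_support
    by (subst expectation_mult_Pi_pmf_blocks[where A = "{i}" and B = "{i'}"])
      (auto simp: expectation_indicator)
qed

lemma expectation_emp_dist:
  assumes "1 \<le> Q" "(j + 1) * Q \<le> N"
  shows "measure_pmf.expectation (Pi_pmf {..<N} 0 (\<lambda>_. p)) (\<lambda>x. emp_dist x Q j k) = pmf p k"
proof -
  have "measure_pmf.expectation (Pi_pmf {..<N} 0 (\<lambda>_. p)) (\<lambda>x. emp_dist x Q j k) =
      (\<Sum>t<Q. measure_pmf.expectation (Pi_pmf {..<N} 0 (\<lambda>_. p)) (\<lambda>x. of_bool (x (j * Q + t) = k)))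
        / real Q"
    by (simp add: emp_dist_eq_sum integrable_sample Bochner_Integration.integral_sum
      del: sum_of_bool_eq)
  also have "\<dots> = (\<Sum>t<Q. pmf p k) / real Q"
    using assms(2) by (intro arg_cong2[where f = "(/)"] sum.cong expectation_indicator) auto
  finally show ?thesis
    using assms(1) by simp
qed

lemma expectation_emp_dist_mult:
  assumes "1 \<le> Q" "(j + 1) * Q \<le> N"
  shows "measure_pmf.expectation (Pi_pmf {..<N} 0 (\<lambda>_. p))
      (\<lambda>x. emp_dist x Q j k * emp_dist x Q j l) =
    emp_cross_moment p Q k l"
proof -
  have "measure_pmf.expectation (Pi_pmf {..<N} 0 (\<lambda>_. p))
      (\<lambda>x. emp_dist x Q j k * emp_dist x Q j l) =
      (\<Sum>t<Q. \<Sum>u<Q. measure_pmf.expectation (Pi_pmf {..<N} 0 (\<lambda>_. p))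
        (\<lambda>x. of_bool (x (j * Q + t) = k) * of_bool (x (j * Q + u) = l))) / real Q ^ 2"
    unfolding emp_dist_eq_sum
    by (simp add: sum_product power2_eq_square integrable_sample Bochner_Integration.integral_sum
      del: sum_of_bool_eq sum_mult_of_bool_eq sum_of_bool_mult_eq)
  also have "\<dots> = (\<Sum>t<Q. \<Sum>u<Q. if t = u then of_bool (k = l) * pmf p k else pmf p k * pmf p l)
      / real Q ^ 2"
    using assms(2) by (intro arg_cong2[where f = "(/)"] sum.cong refl)
      (auto simp: expectation_indicator_pair)
  also have "\<dots> = emp_cross_moment p Q k l"
    using assms(1) by (simp add: sum_sum_if_eq emp_cross_moment_def power2_eq_square field_simps)
  finally show ?thesis .
qed

lemma expectation_theta:
  assumes "1 \<le> Q" "(2 * r + 2) * Q \<le> N"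
  shows "measure_pmf.expectation (Pi_pmf {..<N} 0 (\<lambda>_. p)) (\<lambda>x. theta n x Q r) =
    (\<Sum>k=1..n. (pmf p k)\<^sup>2)"
proof -
  have "measure_pmf.expectation (Pi_pmf {..<N} 0 (\<lambda>_. p)) (\<lambda>x. theta n x Q r) =
      (\<Sum>k=1..n. measure_pmf.expectation (Pi_pmf {..<N} 0 (\<lambda>_. p))
        (\<lambda>x. emp_dist x Q (2 * r) k * emp_dist x Q (2 * r + 1) k))"
    unfolding theta_def using finite_support
    by (simp add: integrable_sample Bochner_Integration.integral_sum)
  also have "\<dots> = (\<Sum>k=1..n.
      measure_pmf.expectation (Pi_pmf {..<N} 0 (\<lambda>_. p)) (\<lambda>x. emp_dist x Q (2 * r) k)
      * measure_pmf.expectation (Pi_pmf {..<N} 0 (\<lambda>_. p)) (\<lambda>x. emp_dist x Q (2 * r + 1) k))"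
    using assms(2) finite_support
    by (intro sum.cong refl expectation_mult_Pi_pmf_blocks[where A = "{2 * r * Q..<(2 * r + 1) * Q}"
      and B = "{(2 * r + 1) * Q..<(2 * r + 2) * Q}"] emp_dist_cong)
      (auto simp: algebra_simps)
  also have "\<dots> = (\<Sum>k=1..n. (pmf p k)\<^sup>2)"
    using assms finite_support
    by (intro sum.cong refl) (simp add: expectation_emp_dist power2_eq_square algebra_simps)
  finally show ?thesis .
qed

lemma expectation_theta_sq:
  assumes "1 \<le> Q" "(2 * r + 2) * Q \<le> N"
  shows "measure_pmf.expectation (Pi_pmf {..<N} 0 (\<lambda>_. p)) (\<lambda>x. (theta n x Q r)\<^sup>2) =
    (\<Sum>k=1..n. \<Sum>l=1..n. (emp_cross_moment p Q k l)\<^sup>2)"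
proof -
  define a b where "a = 2 * r" and "b = 2 * r + 1"
  have square: "(theta n x Q r)\<^sup>2 = (\<Sum>k=1..n. \<Sum>l=1..n.
      (emp_dist x Q a k * emp_dist x Q a l) * (emp_dist x Q b k * emp_dist x Q b l))" for x
    unfolding theta_def a_def b_def power2_eq_square sum_product
    by (intro sum.cong refl) (simp add: algebra_simps)
  have "measure_pmf.expectation (Pi_pmf {..<N} 0 (\<lambda>_. p)) (\<lambda>x. (theta n x Q r)\<^sup>2) =
      (\<Sum>k=1..n. \<Sum>l=1..n. measure_pmf.expectation (Pi_pmf {..<N} 0 (\<lambda>_. p))
        (\<lambda>x. (emp_dist x Q a k * emp_dist x Q a l) * (emp_dist x Q b k * emp_dist x Q b l)))"
    unfolding square using finite_support
    by (simp add: integrable_sample Bochner_Integration.integral_sum)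
  also have "\<dots> = (\<Sum>k=1..n. \<Sum>l=1..n.
      measure_pmf.expectation (Pi_pmf {..<N} 0 (\<lambda>_. p)) (\<lambda>x. emp_dist x Q a k * emp_dist x Q a l) *
      measure_pmf.expectation (Pi_pmf {..<N} 0 (\<lambda>_. p)) (\<lambda>x. emp_dist x Q b k * emp_dist x Q b l))"
    using assms(2) finite_support unfolding a_def b_def
    by (intro sum.cong refl expectation_mult_Pi_pmf_blocks[where A = "{2 * r * Q..<(2 * r + 1) * Q}"
      and B = "{(2 * r + 1) * Q..<(2 * r + 2) * Q}"] arg_cong2[where f = "(*)"] emp_dist_cong)
      (auto simp: algebra_simps)
  also have "\<dots> = (\<Sum>k=1..n. \<Sum>l=1..n. (emp_cross_moment p Q k l)\<^sup>2)"
    using assms finite_support unfolding a_def b_def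
    by (intro sum.cong refl) (simp add: expectation_emp_dist_mult power2_eq_square algebra_simps)
  finally show ?thesis .
qed

lemma prob_theta_deviation_le:
  assumes "1 \<le> Q" "(2 * r + 2) * Q \<le> N" "0 < t"
  shows "measure_pmf.prob (Pi_pmf {..<N} 0 (\<lambda>_. p))
      {x. t \<le> \<bar>theta n x Q r - (\<Sum>k=1..n. (pmf p k)\<^sup>2)\<bar>}
    \<le> ((\<Sum>k=1..n. (pmf p k)\<^sup>2) / real Q ^ 2 + 2 * (\<Sum>k=1..n. pmf p k ^ 3) / real Q) / t\<^sup>2"
proof -
  define M where "M = measure_pmf (Pi_pmf {..<N} 0 (\<lambda>_. p))"
  interpret prob_space M
    unfolding M_def by (rule measure_pmf.prob_space_axioms)
  have integrable: "integrable M f" for f :: "_ \<Rightarrow> real"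
    unfolding M_def by (rule integrable_sample)
  have expectation: "expectation (\<lambda>x. theta n x Q r) = (\<Sum>k=1..n. (pmf p k)\<^sup>2)"
    unfolding M_def by (rule expectation_theta[OF assms(1,2)])
  have "variance (\<lambda>x. theta n x Q r) =
      expectation (\<lambda>x. (theta n x Q r)\<^sup>2) - (expectation (\<lambda>x. theta n x Q r))\<^sup>2"
    by (intro variance_eq integrable)
  also have "\<dots> = (\<Sum>k=1..n. \<Sum>l=1..n. (emp_cross_moment p Q k l)\<^sup>2) - (\<Sum>k=1..n. (pmf p k)\<^sup>2)\<^sup>2"
    using expectation expectation_theta_sq[OF assms(1,2)] by (simp add: M_def)
  also have "\<dots> \<le> (\<Sum>k=1..n. (pmf p k)\<^sup>2) / real Q ^ 2 + 2 * (\<Sum>k=1..n. pmf p k ^ 3) / real Q"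
    using sum_emp_cross_moment_sq_le[of "{1..n}" Q p] assms(1) by simp
  finally have variance: "variance (\<lambda>x. theta n x Q r) \<le>
      (\<Sum>k=1..n. (pmf p k)\<^sup>2) / real Q ^ 2 + 2 * (\<Sum>k=1..n. pmf p k ^ 3) / real Q" .
  have "prob {x \<in> space M. t \<le> \<bar>theta n x Q r - (\<Sum>k=1..n. (pmf p k)\<^sup>2)\<bar>}
      \<le> variance (\<lambda>x. theta n x Q r) / t\<^sup>2"
    using Chebyshev_inequality[of "\<lambda>x. theta n x Q r" t] assms(3) integrable
    unfolding expectation by (simp add: M_def)
  also have "\<dots> \<le> ((\<Sum>k=1..n. (pmf p k)\<^sup>2) / real Q ^ 2 + 2 * (\<Sum>k=1..n. pmf p k ^ 3) / real Q) / t\<^sup>2"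
    using variance by (intro divide_right_mono) auto
  finally show ?thesis
    by (simp add: M_def)
qed

lemma indep_events_theta_deviation:
  assumes "4 * S * Q \<le> N"
  shows "prob_space.indep_events (measure_pmf (Pi_pmf {..<N} 0 (\<lambda>_. p)))
    (\<lambda>r. {x. t < \<bar>theta n x Q r - c\<bar>}) {..<2 * S}"
proof (rule indep_events_Pi_pmf_blocks[where K = "\<lambda>r. {2 * r * Q..<(2 * r + 2) * Q}"])
  show "{2 * r * Q..<(2 * r + 2) * Q} \<subseteq> {..<N}" if "r \<in> {..<2 * S}" for r
    using pair_segments_le[of r S Q N] that assms by auto
  have "(\<lambda>r. {2 * r * Q..<(2 * r + 2) * Q}) = (\<lambda>r. {r * (2 * Q)..<r * (2 * Q) + 2 * Q})"
    by (simp add: algebra_simps)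
  then show "disjoint_family_on (\<lambda>r. {2 * r * Q..<(2 * r + 2) * Q}) {..<2 * S}"
    by (simp add: disjoint_family_on_blocks)
  show "x \<in> {x. t < \<bar>theta n x Q r - c\<bar>} \<longleftrightarrow> y \<in> {x. t < \<bar>theta n x Q r - c\<bar>}"
    if "\<And>i. i \<in> {2 * r * Q..<(2 * r + 2) * Q} \<Longrightarrow> x i = y i" for r x y
    using theta_cong[OF that] by simp
qed (rule finite_lessThan)

lemma prob_median_theta_deviation_le:
  assumes "1 \<le> Q" "4 * S * Q \<le> N" "0 < t"
    and chebyshev_small:
      "((\<Sum>k=1..n. (pmf p k)\<^sup>2) / real Q ^ 2 + 2 * (\<Sum>k=1..n. pmf p k ^ 3) / real Q) / t\<^sup>2 \<le> 2/9"
  shows "measure_pmf.prob (Pi_pmf {..<N} 0 (\<lambda>_. p))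
      {x. t < \<bar>median (map (\<lambda>r. theta n x Q r) [0..<2 * S]) - (\<Sum>k=1..n. (pmf p k)\<^sup>2)\<bar>}
    \<le> binom_tail S"
proof -
  define s2 where "s2 = (\<Sum>k=1..n. (pmf p k)\<^sup>2)"
  define M where "M = measure_pmf (Pi_pmf {..<N} 0 (\<lambda>_. p))"
  define far where "far r = {x. t < \<bar>theta n x Q r - s2\<bar>}" for r
  interpret prob_space M
    unfolding M_def by (rule measure_pmf.prob_space_axioms)
  have "indep_events far {..<2 * S}"
    unfolding M_def far_def by (rule indep_events_theta_deviation[OF assms(2)])
  moreover have "prob (far r) \<le> 2/9" if "r \<in> {..<2 * S}" for r
  proof -
    have "prob (far r) \<le> prob {x. t \<le> \<bar>theta n x Q r - s2\<bar>}"
      by (rule finite_measure_mono) (auto simp: far_def M_def)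
    also have "\<dots> \<le> 2/9"
      unfolding M_def s2_def using that pair_segments_le[of r S Q N] assms(2)
      by (intro order.trans[OF prob_theta_deviation_le[OF assms(1) _ assms(3)] chebyshev_small])
        simp
    finally show ?thesis .
  qed
  ultimately have "prob {x \<in> space M. S \<le> card {r \<in> {..<2 * S}. x \<in> far r}}
      \<le> real (card {..<2 * S} choose S) * (2/9) ^ S"
    by (intro prob_indep_events_at_least_le) auto
  also have "\<dots> \<le> binom_tail S"
    using central_binomial_le_binom_tail by simp
  finally have "prob {x \<in> space M. S \<le> card {r \<in> {..<2 * S}. x \<in> far r}} \<le> binom_tail S" .
  moreover have "{x. t < \<bar>median (map (\<lambda>r. theta n x Q r) [0..<2 * S]) - s2\<bar>}
      \<subseteq> {x \<in> space M. S \<le> card {r \<in> {..<2 * S}. x \<in> far r}}"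
    using card_far_ge_if_median_far by (auto simp: M_def far_def)
  moreover have "{x \<in> space M. S \<le> card {r \<in> {..<2 * S}. x \<in> far r}} \<in> events"
    by (simp add: M_def)
  ultimately show ?thesis
    unfolding s2_def[symmetric] M_def[symmetric] by (meson finite_measure_mono order_trans)
qed

end

section \<open>The \<open>\<ell>\<^sub>2\<close> norm\<close>

lemma sum_pmf_le_1: "finite A \<Longrightarrow> (\<Sum>k\<in>A. pmf p k) \<le> 1"
  using measure_pmf.prob_le_1[of p A] by (simp add: measure_measure_pmf_finite)

lemma sum_pmf_sq_le_1:
  assumes "finite A"
  shows "(\<Sum>k\<in>A. (pmf p k)\<^sup>2) \<le> 1"
proof -
  have "(\<Sum>k\<in>A. (pmf p k)\<^sup>2) \<le> (\<Sum>k\<in>A. pmf p k)"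
    by (intro sum_mono) (simp add: power2_eq_square mult_left_le pmf_le_1)
  then show ?thesis
    using sum_pmf_le_1[OF assms, of p] by linarith
qed

lemma sum_pmf_sq_ge_inverse_card:
  assumes "finite A" "set_pmf p \<subseteq> A"
  shows "1 / real (card A) \<le> (\<Sum>k\<in>A. (pmf p k)\<^sup>2)"
proof -
  define c where "c = 1 / real (card A)"
  have "A \<noteq> {}"
    using assms(2) set_pmf_not_empty[of p] by auto
  then have card: "real (card A) * c = 1"
    using assms(1) by (simp add: c_def)
  have "0 \<le> (\<Sum>k\<in>A. (pmf p k - c)\<^sup>2)"
    by (intro sum_nonneg) auto
  also have "\<dots> = (\<Sum>k\<in>A. (pmf p k)\<^sup>2) - 2 * c * (\<Sum>k\<in>A. pmf p k) + real (card A) * c\<^sup>2"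
    by (simp add: power2_diff sum.distrib sum_subtractf sum_distrib_left algebra_simps)
  also have "\<dots> = (\<Sum>k\<in>A. (pmf p k)\<^sup>2) - c"
    using sum_pmf_eq_1[OF assms] card by (simp add: power2_eq_square algebra_simps)
  finally show ?thesis
    by (simp add: c_def)
qed

lemma sum_pmf_cube_le:
  assumes "finite A"
  shows "(\<Sum>k\<in>A. pmf p k ^ 3) \<le> sqrt (\<Sum>k\<in>A. (pmf p k)\<^sup>2) * (\<Sum>k\<in>A. (pmf p k)\<^sup>2)"
proof -
  have "pmf p k * (pmf p k)\<^sup>2 \<le> sqrt (\<Sum>k\<in>A. (pmf p k)\<^sup>2) * (pmf p k)\<^sup>2" if "k \<in> A" for k
    using member_le_sum[OF that, of "\<lambda>k. (pmf p k)\<^sup>2"] assms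
    by (intro mult_right_mono real_le_rsqrt) auto
  then have "(\<Sum>k\<in>A. pmf p k ^ 3) \<le> (\<Sum>k\<in>A. sqrt (\<Sum>k\<in>A. (pmf p k)\<^sup>2) * (pmf p k)\<^sup>2)"
    by (intro sum_mono) (simp add: power3_eq_cube power2_eq_square mult.assoc)
  then show ?thesis
    by (simp add: sum_distrib_left)
qed

context
  fixes n :: nat and p :: "nat pmf"
  assumes n: "2 \<le> n" and support: "set_pmf p \<subseteq> {1..n}"
begin

lemma l2norm_sq: "(l2norm p n)\<^sup>2 = (\<Sum>k=1..n. (pmf p k)\<^sup>2)"
  unfolding l2norm_def by (simp add: sum_nonneg)

lemma sum_pmf_sq_ge_inverse: "1 / real n \<le> (\<Sum>k=1..n. (pmf p k)\<^sup>2)"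
  using sum_pmf_sq_ge_inverse_card[OF finite_atLeastAtMost support] by simp

lemma l2norm_pos: "0 < l2norm p n"
proof -
  have "0 < 1 / real n"
    using n by simp
  then have "0 < (\<Sum>k=1..n. (pmf p k)\<^sup>2)"
    using sum_pmf_sq_ge_inverse by linarith
  then show ?thesis
    unfolding l2norm_def by simp
qed

lemma l2norm_le_1: "l2norm p n \<le> 1"
  using sum_pmf_sq_le_1[of "{1..n}" p] unfolding l2norm_def by simp

lemma rho_stages_le_l2norm: "rho (stages n) \<le> l2norm p n"
proof -
  have "(rho (stages n))\<^sup>2 \<le> 1 / real n"
    unfolding rho_squared by (rule divide_left_mono) (use two_pow_stages_ge[OF n] n in auto)
  also have "\<dots> \<le> (l2norm p n)\<^sup>2"
    unfolding l2norm_sq by (rule sum_pmf_sq_ge_inverse)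
  finally show ?thesis
    by (rule power2_le_imp_le) (use l2norm_pos in simp)
qed

lemma i_of_bounds:
  "1 \<le> i_of n p" "i_of n p \<le> stages n" "rho (i_of n p) \<le> l2norm p n"
proof -
  have "1 \<le> stages n \<and> stages n \<le> stages n \<and> rho (stages n) \<le> l2norm p n"
    using stages_ge_1[OF n] rho_stages_le_l2norm by simp
  then have "1 \<le> i_of n p \<and> i_of n p \<le> stages n \<and> rho (i_of n p) \<le> l2norm p n"
    unfolding i_of_def by (rule LeastI)
  then show "1 \<le> i_of n p" "i_of n p \<le> stages n" "rho (i_of n p) \<le> l2norm p n"
    by auto
qed

lemma l2norm_le_sqrt2_rho:
  assumes "1 \<le> i" "i \<le> i_of n p"
  shows "l2norm p n \<le> sqrt 2 * rho i"
proof (cases "i = 1")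
  case True
  then show ?thesis
    using l2norm_le_1 rho_eq_sqrt2_mult_rho_Suc[of 0] by (simp add: rho_def)
next
  case False
  then have "\<not> (1 \<le> i - 1 \<and> i - 1 \<le> stages n \<and> rho (i - 1) \<le> l2norm p n)"
    using assms unfolding i_of_def by (intro not_less_Least) auto
  then have "l2norm p n < rho (i - 1)"
    using assms False i_of_bounds(2) by auto
  also have "\<dots> = sqrt 2 * rho i"
    using assms rho_eq_sqrt2_mult_rho_Suc[of "i - 1"] by simp
  finally show ?thesis
    by simp
qed

lemma sum_pmf_sq_le_two_rho_sq:
  assumes "1 \<le> i" "i \<le> i_of n p"
  shows "(\<Sum>k=1..n. (pmf p k)\<^sup>2) \<le> 2 * (rho i)\<^sup>2"
  using power_mono[OF l2norm_le_sqrt2_rho[OF assms], of 2] l2norm_pos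
  by (simp add: l2norm_sq power_mult_distrib)

lemma sum_pmf_cube_le_three_rho_cube:
  assumes "1 \<le> i" "i \<le> i_of n p"
  shows "(\<Sum>k=1..n. pmf p k ^ 3) \<le> 3 * rho i ^ 3"
proof -
  have "sqrt 2 \<le> 3/2"
    by (rule real_le_lsqrt) (auto simp: power2_eq_square)
  then have "l2norm p n \<le> 3/2 * rho i"
    using l2norm_le_sqrt2_rho[OF assms] rho_pos[of i] mult_right_mono[of "sqrt 2" "3/2" "rho i"]
    by linarith
  have "(\<Sum>k=1..n. pmf p k ^ 3) \<le> l2norm p n * (\<Sum>k=1..n. (pmf p k)\<^sup>2)"
    unfolding l2norm_def by (rule sum_pmf_cube_le) simp
  also have "\<dots> \<le> (3/2 * rho i) * (2 * (rho i)\<^sup>2)"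
    using \<open>l2norm p n \<le> 3/2 * rho i\<close> sum_pmf_sq_le_two_rho_sq[OF assms] l2norm_pos
    by (intro mult_mono) (auto simp: sum_nonneg)
  finally show ?thesis
    by (simp add: power2_eq_square power3_eq_cube)
qed

end

section \<open>The training step\<close>

definition stage_accurate :: "nat \<Rightarrow> real \<Rightarrow> nat pmf \<Rightarrow> (nat \<Rightarrow> nat) \<Rightarrow> nat \<Rightarrow> bool" where
  "stage_accurate n \<delta> p x i \<longleftrightarrow> \<bar>Theta n \<delta> x i - (l2norm p n)\<^sup>2\<bar> \<le> (rho i)\<^sup>2 / 3"

lemma moment_ratio_le:
  fixes r s2 s3 :: real and Q :: nat
  assumes r: "0 < r" and Q: "1 / (kappa\<^sup>2 * r) \<le> real Q"
    and s2: "0 \<le> s2" "s2 \<le> 2 * r\<^sup>2" and s3: "0 \<le> s3" "s3 \<le> 3 * r ^ 3"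
  shows "(s2 / real Q ^ 2 + 2 * s3 / real Q) / (r\<^sup>2 / 3)\<^sup>2 \<le> 2/9"
proof -
  define K where "K = kappa\<^sup>2"
  have K: "0 < K" "K \<le> 1/324"
    using kappa_pos kappa_le power_mono[of kappa "1/18" 2] by (auto simp: K_def power2_eq_square)
  have "0 < 1 / (K * r)"
    using K r by simp
  then have "1 / real Q \<le> K * r"
    using Q by (simp add: K_def divide_le_eq mult.commute)
  then have "s2 * (1 / real Q)\<^sup>2 + 2 * s3 * (1 / real Q) \<le>
      2 * r\<^sup>2 * (K * r)\<^sup>2 + 2 * (3 * r ^ 3) * (K * r)"
    using s2 s3 r by (intro add_mono mult_mono power_mono) auto
  also have "\<dots> = (2 * K\<^sup>2 + 6 * K) * r ^ 4"
    by (simp add: eval_nat_numeral algebra_simps)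
  also have "\<dots> \<le> (2 / 81) * r ^ 4"
    using K mult_mono[of K "1/324" K "1/324"]
    by (intro mult_right_mono) (auto simp: power2_eq_square)
  finally show ?thesis
    using r by (simp add: power_divide field_simps)
qed

context
  fixes n :: nat and p :: "nat pmf"
  assumes n: "2 \<le> n" and support: "set_pmf p \<subseteq> {1..n}"
begin

lemma stop_stage_le_i_of:
  assumes N: "4 * S_param n \<delta> * Q_param (i_of n p) \<le> N"
    and accurate: "stage_accurate n \<delta> p x (i_of n p)"
  shows "1 \<le> stop_stage n \<delta> N x" "stop_stage n \<delta> N x \<le> i_of n p"
    "2 * (rho (stop_stage n \<delta> N x))\<^sup>2 / 3 \<le> Theta n \<delta> x (stop_stage n \<delta> N x)"
proof -
  define I j where "I = i_of n p" and "j = stop_stage n \<delta> N x"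
  have I: "1 \<le> I" "I \<le> stages n" "rho I \<le> l2norm p n"
    using i_of_bounds[OF n support] by (simp_all add: I_def)
  have "(rho I)\<^sup>2 \<le> (l2norm p n)\<^sup>2"
    using I(3) rho_pos[of I] by (simp add: power_mono)
  with accurate have passed_I: "2 * (rho I)\<^sup>2 / 3 \<le> Theta n \<delta> x I"
    unfolding I_def stage_accurate_def abs_le_iff by linarith
  then have stops: "1 \<le> I \<and> stop_cond n \<delta> N x I"
    using I(1) by (simp add: stop_cond_def)
  then have j: "1 \<le> j \<and> stop_cond n \<delta> N x j"
    unfolding j_def stop_stage_def by (rule LeastI)
  from stops show "j \<le> I"
    unfolding j_def stop_stage_def by (rule Least_le)
  then show "1 \<le> j"
    using j by simp
  txt \<open>A stop before stage \<open>I\<close> cannot be caused by the sample size, which suffices for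
    stage \<open>I\<close>, so it passed the threshold test.\<close>
  show "2 * (rho j)\<^sup>2 / 3 \<le> Theta n \<delta> x j"
  proof (cases "j = I")
    case False
    with \<open>j \<le> I\<close> have "Q_param (j + 1) \<le> Q_param I"
      by (intro Q_param_mono) simp
    then have "4 * S_param n \<delta> * Q_param (j + 1) \<le> N"
      using N unfolding I_def by (meson le_trans mult_le_mono2)
    moreover have "j \<noteq> stages n"
      using False \<open>j \<le> I\<close> I(2) by simp
    ultimately show ?thesis
      using j by (auto simp: stop_cond_def)
  qed (use passed_I in simp)
qed

lemma training_step_correct_if_accurate:
  assumes N: "4 * S_param n \<delta> * Q_param (i_of n p) \<le> N"
    and accurate: "\<And>i. 1 \<le> i \<Longrightarrow> i \<le> i_of n p \<Longrightarrow> stage_accurate n \<delta> p x i"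
  shows "stop_stage n \<delta> N x \<le> i_of n p \<and>
    (l2norm p n)\<^sup>2 \<le> estimate n \<delta> N x \<and> estimate n \<delta> N x \<le> 3 * (l2norm p n)\<^sup>2"
proof -
  define j where "j = stop_stage n \<delta> N x"
  have j: "1 \<le> j" "j \<le> i_of n p" "2 * (rho j)\<^sup>2 / 3 \<le> Theta n \<delta> x j"
    using stop_stage_le_i_of[OF N accurate] i_of_bounds(1)[OF n support] by (simp_all add: j_def)
  with accurate have "\<bar>Theta n \<delta> x j - (l2norm p n)\<^sup>2\<bar> \<le> (rho j)\<^sup>2 / 3"
    by (simp add: stage_accurate_def)
  with j(3) have "(l2norm p n)\<^sup>2 \<le> Theta n \<delta> x j + (rho j)\<^sup>2 / 3"
    "Theta n \<delta> x j + (rho j)\<^sup>2 / 3 \<le> 3 * (l2norm p n)\<^sup>2"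
    unfolding abs_le_iff by linarith+
  with j(2) show ?thesis
    by (simp add: estimate_def j_def[symmetric] Let_def)
qed

lemma prob_stage_inaccurate_le:
  assumes \<delta>: "0 < \<delta>" "\<delta> < 1"
    and N: "4 * S_param n \<delta> * Q_param (i_of n p) \<le> N"
    and i: "1 \<le> i" "i \<le> i_of n p"
  shows "measure_pmf.prob (Pi_pmf {..<N} 0 (\<lambda>_. p)) {x. \<not> stage_accurate n \<delta> p x i}
    \<le> \<delta> / real (stages n)"
proof -
  define s2 where "s2 = (\<Sum>k=1..n. (pmf p k)\<^sup>2)"
  have "4 * S_param n \<delta> * Q_param i \<le> N"
    using N Q_param_mono[OF i(2)] by (meson le_trans mult_le_mono2)
  moreover have "(s2 / real (Q_param i) ^ 2 + 2 * (\<Sum>k=1..n. pmf p k ^ 3) / real (Q_param i))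
      / ((rho i)\<^sup>2 / 3)\<^sup>2 \<le> 2/9"
    using sum_pmf_sq_le_two_rho_sq[OF n support i] sum_pmf_cube_le_three_rho_cube[OF n support i]
    by (intro moment_ratio_le rho_pos Q_param_ge) (auto simp: s2_def intro: sum_nonneg)
  ultimately have "measure_pmf.prob (Pi_pmf {..<N} 0 (\<lambda>_. p))
      {x. (rho i)\<^sup>2 / 3 < \<bar>median (map (\<lambda>j. theta n x (Q_param i) j) [0..<2 * S_param n \<delta>]) - s2\<bar>}
      \<le> binom_tail (S_param n \<delta>)"
    unfolding s2_def using support Q_param_pos rho_pos[of i]
    by (intro prob_median_theta_deviation_le) (auto intro: finite_subset)
  also have "\<dots> \<le> \<delta> / real (stages n)"
    by (rule binom_tail_S_param[OF n \<delta>])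
  finally show ?thesis
    by (simp add: stage_accurate_def Theta_def l2norm_sq[OF n support] s2_def not_le)
qed

lemma prob_training_step_correct:
  assumes \<delta>: "0 < \<delta>" "\<delta> < 1"
    and N: "4 * S_param n \<delta> * Q_param (i_of n p) \<le> N"
  shows "1 - \<delta> \<le> measure_pmf.prob (Pi_pmf {..<N} 0 (\<lambda>_. p))
    {x. stop_stage n \<delta> N x \<le> i_of n p \<and>
        (l2norm p n)\<^sup>2 \<le> estimate n \<delta> N x \<and> estimate n \<delta> N x \<le> 3 * (l2norm p n)\<^sup>2}"
  (is "_ \<le> measure_pmf.prob ?M ?good")
proof -
  define I where "I = i_of n p"
  have "UNIV - ?good \<subseteq> (\<Union>i\<in>{1..I}. {x. \<not> stage_accurate n \<delta> p x i})"
    using training_step_correct_if_accurate[OF N] by (auto simp: I_def)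
  then have "measure_pmf.prob ?M (UNIV - ?good)
      \<le> measure_pmf.prob ?M (\<Union>i\<in>{1..I}. {x. \<not> stage_accurate n \<delta> p x i})"
    by (intro measure_pmf.finite_measure_mono) auto
  also have "\<dots> \<le> (\<Sum>i\<in>{1..I}. measure_pmf.prob ?M {x. \<not> stage_accurate n \<delta> p x i})"
    by (intro measure_pmf.finite_measure_subadditive_finite) auto
  also have "\<dots> \<le> (\<Sum>i\<in>{1..I}. \<delta> / real (stages n))"
    using prob_stage_inaccurate_le[OF \<delta> N] by (intro sum_mono) (auto simp: I_def)
  also have "\<dots> \<le> \<delta>"
    using i_of_bounds(2)[OF n support] stages_ge_1[OF n] \<delta> by (simp add: I_def field_simps)
  finally show ?thesis
    using measure_pmf.prob_compl[of ?good ?M] by simp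
qed

lemma Q_param_i_of_le: "real (Q_param (i_of n p)) \<le> 2 * (1 / kappa\<^sup>2 + 1) / l2norm p n"
proof -
  define r where "r = rho (i_of n p)"
  have r: "0 < r" "r \<le> 1"
    by (simp_all add: r_def rho_pos rho_le_1)
  have "sqrt 2 \<le> 2"
    by (rule real_le_lsqrt) auto
  then have "sqrt 2 * r \<le> 2 * r"
    using r by (intro mult_right_mono) auto
  then have "l2norm p n \<le> 2 * r"
    using l2norm_le_sqrt2_rho[OF n support i_of_bounds(1)[OF n support] order.refl] by (simp add: r_def)
  then have inverse_r: "1 / r \<le> 2 / l2norm p n"
    using r l2norm_pos[OF n support] by (simp add: field_simps)
  have "1 \<le> 1 / r"
    using r by simp
  then have "real (Q_param (i_of n p)) \<le> 1 / kappa\<^sup>2 * (1 / r) + 1 / r"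
    using Q_param_le[of "i_of n p"] by (simp add: r_def)
  also have "\<dots> = (1 / kappa\<^sup>2 + 1) * (1 / r)"
    by (simp add: algebra_simps)
  also have "\<dots> \<le> (1 / kappa\<^sup>2 + 1) * (2 / l2norm p n)"
    using inverse_r by (intro mult_left_mono) auto
  finally show ?thesis
    by simp
qed

end

theorem proposition2:
  shows "\<exists>C::real. \<forall>(n::nat) (p::nat pmf) (\<delta>::real) (N::nat).
    2 \<le> n \<and> set_pmf p \<subseteq> {1..n} \<and> 0 < \<delta> \<and> \<delta> < 1 \<and>
    4 * S_param n \<delta> * Q_param (i_of n p) \<le> N \<longrightarrow>
      measure_pmf.prob (Pi_pmf {..<N} 0 (\<lambda>_. p))
        {x. stop_stage n \<delta> N x \<le> i_of n p \<and>
            l2norm p n ^ 2 \<le> estimate n \<delta> N x \<and> estimate n \<delta> N x \<le> 3 * l2norm p n ^ 2}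
        \<ge> 1 - \<delta> \<and>
      (\<forall>x. stop_stage n \<delta> N x \<le> i_of n p \<longrightarrow>
            obs_used n \<delta> N x \<le> 4 * S_param n \<delta> * Q_param (i_of n p)) \<and>
      real (4 * S_param n \<delta> * Q_param (i_of n p))
        \<le> C * max 1 (ln (ln (real n) / \<delta>)) / l2norm p n"
proof (intro exI[of _ "224 * (1 / kappa\<^sup>2 + 1)"] allI impI conjI)
  fix n N :: nat and p :: "nat pmf" and \<delta> :: real
  assume "2 \<le> n \<and> set_pmf p \<subseteq> {1..n} \<and> 0 < \<delta> \<and> \<delta> < 1 \<and> 4 * S_param n \<delta> * Q_param (i_of n p) \<le> N"
  then have n: "2 \<le> n" and support: "set_pmf p \<subseteq> {1..n}" and \<delta>: "0 < \<delta>" "\<delta> < 1"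
    and N: "4 * S_param n \<delta> * Q_param (i_of n p) \<le> N"
    by auto
  show "measure_pmf.prob (Pi_pmf {..<N} 0 (\<lambda>_. p))
      {x. stop_stage n \<delta> N x \<le> i_of n p \<and>
        l2norm p n ^ 2 \<le> estimate n \<delta> N x \<and> estimate n \<delta> N x \<le> 3 * l2norm p n ^ 2} \<ge> 1 - \<delta>"
    by (rule prob_training_step_correct[OF n support \<delta> N])
  show "obs_used n \<delta> N x \<le> 4 * S_param n \<delta> * Q_param (i_of n p)"
    if "stop_stage n \<delta> N x \<le> i_of n p" for x
    using Q_param_mono[OF that] by (simp add: obs_used_def)
  have "real (4 * S_param n \<delta> * Q_param (i_of n p)) \<le>
      4 * (28 * max 1 (ln (ln (real n) / \<delta>))) * (2 * (1 / kappa\<^sup>2 + 1) / l2norm p n)"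
    using S_param_le_log_log[OF n \<delta>] Q_param_i_of_le[OF n support]
    by (simp only: of_nat_mult) (intro mult_mono mult_left_mono; simp)
  then show "real (4 * S_param n \<delta> * Q_param (i_of n p)) \<le>
      224 * (1 / kappa\<^sup>2 + 1) * max 1 (ln (ln (real n) / \<delta>)) / l2norm p n"
    by (simp add: field_simps)
qed

end
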